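(* With the notation below, the homomorphisms $\deg$ and $\chi$ vanish on the subgroup $\mathcal P$ of principal divisors, and the induced map $(\deg,\chi):\mathrm{Div}(C_p)/\mathcal P\to\mathbb{R}\times(\mathbb{Z}/(p-1)\mathbb{Z})$ is an isomorphism of abelian groups.
   Context: Let $p$ be a prime and $H_p=\mathbb{Z}[1/p]\subset\mathbb{Q}$; $\chi:H_p\to\mathbb{Z}/(p-1)\mathbb{Z}$, $\chi(a/p^n)=a\bmod(p-1)$. $C_p$ is the set of subgroups $H=\lambda H_p\subset\mathbb{R}$, $\lambda>0$. For $H=\lambda H_p$ define $\chi_H:H\to\mathbb{Z}/(p-1)\mathbb{Z}$ by $\chi_H(x)=\chi(\lambda^{-1}x)$ (independent of $\lambda$). $\mathcal K(C_p)$: continuous piecewise affine functions $f:(0,\infty)\to\mathbb{R}$ with slopes in $H_p$ and $f(p\lambda)=f(\lambda)$ (plus the constant $-\infty$). For real-valued $f$ and $H=\lambda H_p$, $\mathrm{Ord}_H(f)=h_+-h_-$ with $h_\pm=\lim_{\epsilon\to0\pm}(f((1+\epsilon)\lambda)-f(\lambda))/\epsilon\in H$. A divisor $D$ on $C_p$ assigns $D(H)\in H$ to each $H\in C_p$, zero for all but finitely many $H$; $\mathrm{Div}(C_p)$ is the group of divisors under pointwise addition. $\deg(D)=\sum_H D(H)\in\mathbb{R}$, $\chi(D)=\sum_H\chi_H(D(H))$. The principal divisor of real-valued $f\in\mathcal K(C_p)$ is $(f)(H)=\mathrm{Ord}_H(f)$; $\mathcal P$ is the subgroup of principal divisors. 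*)

theory Defs
  imports Complex_Main "HOL-Computational_Algebra.Primes"
begin

definition Hp :: "nat \<Rightarrow> real set" where
  "Hp p = {of_int a / real p ^ n | a n. True}"

text \<open>Z/(p-1)Z is represented by the residues {0..<p-1} of int, with
  addition modulo p-1.  chi(a/p^n) = a mod (p-1).\<close>
definition chi :: "nat \<Rightarrow> real \<Rightarrow> int" where
  "chi p x = (THE r. \<exists>(a::int) (n::nat). x = of_int a / real p ^ n \<and> r = a mod (int p - 1))"

definition Cp :: "nat \<Rightarrow> real set set" where
  "Cp p = {H. \<exists>l>0. H = (\<lambda>x. l * x) ` Hp p}"

definition scal :: "nat \<Rightarrow> real set \<Rightarrow> real" where
  "scal p H = (SOME l. l > 0 \<and> H = (\<lambda>x. l * x) ` Hp p)"

definition chiH :: "nat \<Rightarrow> real set \<Rightarrow> real \<Rightarrow> int" where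
  "chiH p H x = chi p (x / scal p H)"

definition supp :: "(real set \<Rightarrow> real) \<Rightarrow> real set set" where
  "supp D = {H. D H \<noteq> 0}"

definition Div :: "nat \<Rightarrow> (real set \<Rightarrow> real) set" where
  "Div p = {D. (\<forall>H\<in>Cp p. D H \<in> H) \<and> (\<forall>H. H \<notin> Cp p \<longrightarrow> D H = 0) \<and> finite (supp D)}"

definition deg :: "(real set \<Rightarrow> real) \<Rightarrow> real" where
  "deg D = (\<Sum>H\<in>supp D. D H)"

definition chiD :: "nat \<Rightarrow> (real set \<Rightarrow> real) \<Rightarrow> int" where
  "chiD p D = (\<Sum>H\<in>supp D. chiH p H (D H)) mod (int p - 1)"

definition piecewise_affine_Hp :: "nat \<Rightarrow> (real \<Rightarrow> real) \<Rightarrow> bool" where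
  "piecewise_affine_Hp p f \<longleftrightarrow>
     (\<forall>a b. 0 < a \<longrightarrow> a < b \<longrightarrow>
        (\<exists>ts::real list. sorted_wrt (<) ts \<and> length ts \<ge> 2 \<and> hd ts = a \<and> last ts = b \<and>
           (\<forall>i. Suc i < length ts \<longrightarrow>
              (\<exists>m\<in>Hp p. \<exists>c. \<forall>x\<in>{ts ! i .. ts ! Suc i}. f x = m * x + c))))"

definition K :: "nat \<Rightarrow> (real \<Rightarrow> real) set" where
  "K p = {f. continuous_on {0<..} f \<and> piecewise_affine_Hp p f \<and>
             (\<forall>x>0. f (real p * x) = f x)}"

definition Ord :: "nat \<Rightarrow> real set \<Rightarrow> (real \<Rightarrow> real) \<Rightarrow> real" where
  "Ord p H f = (let l = scal p H in
      Lim (at_right 0) (\<lambda>e. (f ((1 + e) * l) - f l) / e)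
    - Lim (at_left 0) (\<lambda>e. (f ((1 + e) * l) - f l) / e))"

definition principal :: "nat \<Rightarrow> (real \<Rightarrow> real) \<Rightarrow> (real set \<Rightarrow> real)" where
  "principal p f = (\<lambda>H. if H \<in> Cp p then Ord p H f else 0)"

definition Prin :: "nat \<Rightarrow> (real set \<Rightarrow> real) set" where
  "Prin p = principal p ` K p"

end

theory Submission
  imports Defs "HOL-Analysis.Elementary_Metric_Spaces"
begin

text \<open>
  Since \<open>p\<close> is prime, the positive units of \<open>H\<^sub>p\<close> are the powers of \<open>p\<close>, so every
  \<open>H \<in> C\<^sub>p\<close> is \<open>r H\<^sub>p\<close> for a unique \<open>r \<in> [1, p)\<close>.  A function \<open>f \<in> \<K>(C\<^sub>p)\<close> is
  determined by its restriction to \<open>[1, p]\<close>, which is affine with slope \<open>s\<^sub>i \<in> H\<^sub>p\<close> on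
  each piece of a partition \<open>1 = t\<^sub>0 < \<dots> < t\<^sub>n = p\<close>.  Its divisor is supported on the
  classes of the \<open>t\<^sub>i\<close>, with value \<open>t\<^sub>i\<close> times the jump of the slope at \<open>t\<^sub>i\<close>.  By
  continuity these values telescope to \<open>0\<close>, while the slope jumps themselves sum to
  \<open>(1 - p) s\<^sub>n\<^sub>-\<^sub>1\<close>, on which \<open>\<chi>\<close> vanishes because \<open>p \<equiv> 1\<close> modulo \<open>p - 1\<close>.

  Conversely, a divisor \<open>D\<close> with \<open>deg D = 0\<close> and \<open>\<chi>(D) = 0\<close> is the divisor of the
  \<open>p\<close>-periodic extension of a sum of hinges \<open>g y = \<Sum> c\<^sub>z max 0 (y - z)\<close> over the
  representatives \<open>z \<in> [1, p)\<close> of its support, with \<open>c\<^sub>z = D(z H\<^sub>p) / z\<close> for \<open>z > 1\<close>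
  and \<open>c\<^sub>1\<close> chosen so that \<open>g p = g 1 = 0\<close>.  Finally every pair \<open>(r, c)\<close> is attained by
  a divisor supported on at most two classes.
\<close>

section \<open>Piecewise affine functions on the real line\<close>

lemma power_int_less_iff:
  fixes x :: "'a::linordered_field"
  assumes "1 < x"
  shows "x powi k < x powi l \<longleftrightarrow> k < l"
  using assms power_int_strict_increasing[of k l x] power_int_increasing[of l k x]
  by (meson less_le_not_le linorder_not_less order_less_imp_le)

lemma sorted_partition_avoiding:
  fixes Z :: "real set"
  assumes "finite Z" "a < b"
  obtains ts where "sorted_wrt (<) ts" "2 \<le> length ts" "hd ts = a" "last ts = b"
    "\<And>i. Suc i < length ts \<Longrightarrow>
       a \<le> ts ! i \<and> ts ! Suc i \<le> b \<and> (\<forall>z\<in>Z. \<not> (ts ! i < z \<and> z < ts ! Suc i))"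
proof
  define A where "A = {a, b} \<union> {z\<in>Z. a < z \<and> z < b}"
  define ts where "ts = sorted_list_of_set A"
  have fin: "finite A" and ab: "a \<in> A" "b \<in> A"
    using assms(1) by (auto simp: A_def)
  have A_bounds: "a \<le> y \<and> y \<le> b" if "y \<in> A" for y
    using that assms(2) by (auto simp: A_def)
  have set_ts: "set ts = A" and sorted: "sorted ts" and distinct: "distinct ts"
    using fin by (simp_all add: ts_def)
  show strict: "sorted_wrt (<) ts" by (simp add: ts_def)
  have "card {a, b} \<le> card A"
    using fin ab by (intro card_mono) auto
  then show len: "2 \<le> length ts"
    using distinct_card[OF distinct] set_ts assms(2) by simp
  then have ne: "ts \<noteq> []" by auto
  have "hd ts = Min A"
    using ab unfolding ts_def by (subst sorted_list_of_set_nonempty[OF fin]) auto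
  also have "Min A = a"
    using fin ab A_bounds by (intro Min_eqI) auto
  finally show "hd ts = a" .
  obtain j where j: "j < length ts" "ts ! j = b"
    using ab set_ts by (metis in_set_conv_nth)
  then have "b \<le> last ts"
    using sorted_nth_mono[OF sorted, of j "length ts - 1"] last_conv_nth[OF ne] by simp
  moreover have "last ts \<in> A"
    using last_in_set[OF ne] set_ts by simp
  ultimately show "last ts = b"
    using A_bounds by force
  fix i assume i: "Suc i < length ts"
  have ends: "ts ! i \<in> A" "ts ! Suc i \<in> A"
    using i set_ts nth_mem[of i ts] nth_mem[of "Suc i" ts] by auto
  have "\<not> (ts ! i < z \<and> z < ts ! Suc i)" if "z \<in> Z" for z
  proof
    assume z: "ts ! i < z \<and> z < ts ! Suc i"
    then have "z \<in> A"
      using that A_bounds[OF ends(1)] A_bounds[OF ends(2)] by (auto simp: A_def)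
    then obtain k where k: "k < length ts" "ts ! k = z"
      using set_ts by (metis in_set_conv_nth)
    show False
      using sorted_nth_mono[OF sorted, of k i] sorted_nth_mono[OF sorted, of "Suc i" k] i k z
      by (cases "k \<le> i") auto
  qed
  then show "a \<le> ts ! i \<and> ts ! Suc i \<le> b \<and> (\<forall>z\<in>Z. \<not> (ts ! i < z \<and> z < ts ! Suc i))"
    using A_bounds[OF ends(1)] A_bounds[OF ends(2)] by blast
qed

lemma piecewise_affine_HpI:
  assumes "\<And>a b. 0 < a \<Longrightarrow> a < b \<Longrightarrow> \<exists>Z. finite Z \<and>
      (\<forall>u v. a \<le> u \<longrightarrow> u < v \<longrightarrow> v \<le> b \<longrightarrow> (\<forall>z\<in>Z. \<not> (u < z \<and> z < v)) \<longrightarrow>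
        (\<exists>s\<in>Hp p. \<exists>c. \<forall>x\<in>{u..v}. f x = s * x + c))"
  shows "piecewise_affine_Hp p f"
  unfolding piecewise_affine_Hp_def
proof (intro allI impI)
  fix a b :: real
  assume ab: "0 < a" "a < b"
  then obtain Z where "finite Z" and affine: "\<forall>u v. a \<le> u \<longrightarrow> u < v \<longrightarrow> v \<le> b \<longrightarrow>
      (\<forall>z\<in>Z. \<not> (u < z \<and> z < v)) \<longrightarrow> (\<exists>s\<in>Hp p. \<exists>c. \<forall>x\<in>{u..v}. f x = s * x + c)"
    using assms[OF ab] by blast
  obtain ts where ts: "sorted_wrt (<) ts" "2 \<le> length ts" "hd ts = a" "last ts = b"
    and pieces: "\<And>i. Suc i < length ts \<Longrightarrow>
       a \<le> ts ! i \<and> ts ! Suc i \<le> b \<and> (\<forall>z\<in>Z. \<not> (ts ! i < z \<and> z < ts ! Suc i))"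
    using sorted_partition_avoiding[OF \<open>finite Z\<close> ab(2)] by metis
  show "\<exists>ts. sorted_wrt (<) ts \<and> 2 \<le> length ts \<and> hd ts = a \<and> last ts = b \<and>
      (\<forall>i. Suc i < length ts \<longrightarrow> (\<exists>s\<in>Hp p. \<exists>c. \<forall>x\<in>{ts ! i..ts ! Suc i}. f x = s * x + c))"
  proof (intro exI[of _ ts] conjI allI impI)
    fix i
    assume i: "Suc i < length ts"
    then have "ts ! i < ts ! Suc i"
      using sorted_wrt_nth_less[OF ts(1)] by simp
    then show "\<exists>s\<in>Hp p. \<exists>c. \<forall>x\<in>{ts ! i..ts ! Suc i}. f x = s * x + c"
      using pieces[OF i] by (intro affine[rule_format]) auto
  qed (use ts in auto)
qed

lemma tendsto_diff_quotient_right: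
  fixes f :: "real \<Rightarrow> real"
  assumes "0 < x" "0 < d" "\<forall>y\<in>{x..x+d}. f y = a * y + c"
  shows "((\<lambda>e. (f ((1 + e) * x) - f x) / e) \<longlongrightarrow> a * x) (at_right 0)"
proof (rule tendsto_eventually, rule eventually_at_rightI)
  fix e :: real
  assume "e \<in> {0<..<d / x}"
  then have "0 < e" "e * x < d"
    using assms(1) by (auto simp: field_simps)
  then have "(1 + e) * x \<in> {x..x+d}"
    using assms(1) by (auto simp: algebra_simps)
  then show "(f ((1 + e) * x) - f x) / e = a * x"
    using assms \<open>0 < e\<close> by (simp add: field_simps)
qed (use assms in simp)

lemma tendsto_diff_quotient_left:
  fixes f :: "real \<Rightarrow> real"
  assumes "0 < x" "0 < d" "\<forall>y\<in>{x-d..x}. f y = a * y + c"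
  shows "((\<lambda>e. (f ((1 + e) * x) - f x) / e) \<longlongrightarrow> a * x) (at_left 0)"
proof (rule tendsto_eventually, rule eventually_at_leftI)
  fix e :: real
  assume "e \<in> {- d / x<..<0}"
  then have "e < 0" "- d < e * x"
    using assms(1) by (auto simp: field_simps)
  then have "(1 + e) * x \<in> {x-d..x}"
    using assms(1) by (auto simp: algebra_simps mult_nonpos_nonneg)
  then show "(f ((1 + e) * x) - f x) / e = a * x"
    using assms \<open>e < 0\<close> by (simp add: field_simps)
qed (use assms in simp)

lemma sum_hinge_eq_affine:
  fixes X :: "real set"
  assumes "finite X" "\<forall>z\<in>X. \<not> (u < z \<and> z < v)" "y \<in> {u..v}"
  shows "(\<Sum>z\<in>X. c z * max 0 (y - z))
    = (\<Sum>z\<in>{z\<in>X. z \<le> u}. c z) * y - (\<Sum>z\<in>{z\<in>X. z \<le> u}. c z * z)"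
proof -
  have "c z * max 0 (y - z) = (if z \<le> u then c z * (y - z) else 0)" if "z \<in> X" for z
    using assms(2,3) that by (cases "z \<le> u") force+
  then have "(\<Sum>z\<in>X. c z * max 0 (y - z)) = (\<Sum>z\<in>{z\<in>X. z \<le> u}. c z * (y - z))"
    using assms(1) by (simp add: sum.inter_filter)
  then show ?thesis
    by (simp add: right_diff_distrib sum_subtractf sum_distrib_right)
qed

lemma sum_hinge_affine_right:
  fixes X :: "real set"
  assumes "finite X"
  shows "\<exists>d>0. \<exists>e. \<forall>y\<in>{r..r+d}.
    (\<Sum>z\<in>X. c z * max 0 (y - z)) = (\<Sum>z\<in>{z\<in>X. z \<le> r}. c z) * y + e"
proof -
  obtain d where d: "0 < d" "\<forall>z\<in>X. z \<noteq> r \<longrightarrow> d \<le> dist r z"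
    using finite_set_avoid[OF assms] by blast
  then have gap: "\<forall>z\<in>X. \<not> (r < z \<and> z < r + d)"
    by (force simp: dist_real_def)
  have hinge: "\<forall>y\<in>{r..r+d}. (\<Sum>z\<in>X. c z * max 0 (y - z))
      = (\<Sum>z\<in>{z\<in>X. z \<le> r}. c z) * y + - (\<Sum>z\<in>{z\<in>X. z \<le> r}. c z * z)"
    using sum_hinge_eq_affine[OF assms gap] by simp
  show ?thesis
    by (rule exI[of _ d], rule conjI[OF d(1)], rule exI, rule hinge)
qed

lemma sum_hinge_affine_left:
  fixes X :: "real set"
  assumes "finite X"
  shows "\<exists>d>0. \<exists>e. \<forall>y\<in>{r-d..r}.
    (\<Sum>z\<in>X. c z * max 0 (y - z)) = (\<Sum>z\<in>{z\<in>X. z < r}. c z) * y + e"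
proof -
  obtain d where d: "0 < d" "\<forall>z\<in>X. z \<noteq> r \<longrightarrow> d \<le> dist r z"
    using finite_set_avoid[OF assms] by blast
  then have gap: "\<forall>z\<in>X. \<not> (r - d < z \<and> z < r)"
    by (force simp: dist_real_def)
  moreover have "{z\<in>X. z \<le> r - d} = {z\<in>X. z < r}"
    using gap d(1) by force
  ultimately have hinge: "\<forall>y\<in>{r-d..r}. (\<Sum>z\<in>X. c z * max 0 (y - z))
      = (\<Sum>z\<in>{z\<in>X. z < r}. c z) * y + - (\<Sum>z\<in>{z\<in>X. z \<le> r - d}. c z * z)"
    using sum_hinge_eq_affine[OF assms] by simp
  show ?thesis
    by (rule exI[of _ d], rule conjI[OF d(1)], rule exI, rule hinge)
qed

lemma sum_le_minus_sum_less:
  fixes X :: "real set" and c :: "real \<Rightarrow> real"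
  assumes "finite X"
  shows "(\<Sum>z\<in>{z\<in>X. z \<le> r}. c z) - (\<Sum>z\<in>{z\<in>X. z < r}. c z) = (if r \<in> X then c r else 0)"
proof (cases "r \<in> X")
  case True
  have "{z\<in>X. z \<le> r} = insert r {z\<in>X. z < r}"
    using True by auto
  moreover have "finite {z\<in>X. z < r}" "r \<notin> {z\<in>X. z < r}"
    using assms by simp_all
  ultimately show ?thesis
    using True by (simp only: sum.insert) simp
next
  case False
  then have "{z\<in>X. z \<le> r} = {z\<in>X. z < r}"
    by (auto simp: order_le_less)
  then show ?thesis
    using False by simp
qed

section \<open>The group \<open>H\<^sub>p\<close> and the character \<open>\<chi>\<close>\<close>

locale p_scaling =
  fixes p :: nat
  assumes p_gt_1: "1 < p"
begin

abbreviation P :: real where "P \<equiv> real p"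
abbreviation m :: int where "m \<equiv> int p - 1"

lemma p_pos [simp]: "0 < p" and p_neq_0 [simp]: "p \<noteq> 0"
  using p_gt_1 by simp_all

lemma P_gt_1: "1 < P"
  using p_gt_1 by simp

lemma P_pos: "0 < P"
  using P_gt_1 by simp

lemma Hp_iff: "x \<in> Hp p \<longleftrightarrow> (\<exists>a n. x = of_int a / P ^ n)"
  by (auto simp: Hp_def)

lemma Hp_of_int [simp]: "of_int a \<in> Hp p"
  unfolding Hp_iff by (rule exI[of _ a], rule exI[of _ 0]) simp

lemma Hp_0 [simp]: "0 \<in> Hp p" and Hp_1 [simp]: "1 \<in> Hp p" and Hp_P [simp]: "P \<in> Hp p"
  using Hp_of_int[of 0] Hp_of_int[of 1] Hp_of_int[of "int p"] by simp_all

lemma of_int_div_add: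
  "of_int a / P ^ n + of_int b / P ^ k = of_int (a * int p ^ k + b * int p ^ n) / P ^ (n + k)"
  using P_pos by (simp add: field_simps power_add)

lemma Hp_add: "x \<in> Hp p \<Longrightarrow> y \<in> Hp p \<Longrightarrow> x + y \<in> Hp p"
  unfolding Hp_iff using of_int_div_add by blast

lemma Hp_mult:
  assumes "x \<in> Hp p" "y \<in> Hp p"
  shows "x * y \<in> Hp p"
proof -
  obtain a n b k where "x = of_int a / P ^ n" "y = of_int b / P ^ k"
    using assms unfolding Hp_iff by blast
  then have "x * y = of_int (a * b) / P ^ (n + k)"
    by (simp add: power_add)
  then show ?thesis
    unfolding Hp_iff by blast
qed

lemma Hp_uminus: "x \<in> Hp p \<Longrightarrow> - x \<in> Hp p"
  using Hp_mult[OF Hp_of_int[of "-1"]] by simp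

lemma Hp_diff: "x \<in> Hp p \<Longrightarrow> y \<in> Hp p \<Longrightarrow> x - y \<in> Hp p"
  using Hp_add[OF _ Hp_uminus] by simp

lemma Hp_sum: "(\<And>i. i \<in> A \<Longrightarrow> f i \<in> Hp p) \<Longrightarrow> (\<Sum>i\<in>A. f i) \<in> Hp p"
  by (induction A rule: infinite_finite_induct) (auto intro: Hp_add)

text \<open>Since \<open>p \<equiv> 1\<close> modulo \<open>p - 1\<close>, multiplying by a power of \<open>p\<close> does not change the
  residue of the numerator; this is what makes \<open>\<chi>\<close> well defined.\<close>

lemma int_power_p_mod: "int p ^ k mod m = 1 mod m"
proof -
  have "int p mod m = 1 mod m"
    using mod_add_self1[of m 1] by simp
  then have "int p ^ k mod m = (1 mod m) ^ k mod m"
    by (metis power_mod)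
  then show ?thesis
    by (simp add: power_mod)
qed

lemma mult_power_p_mod: "a * int p ^ k mod m = a mod m"
proof -
  have "a * int p ^ k mod m = a * (int p ^ k mod m) mod m"
    by (simp add: mod_mult_right_eq)
  then show ?thesis
    by (simp add: int_power_p_mod mod_mult_right_eq)
qed

lemma of_int_div_mult_powi:
  "\<exists>b j. of_int a / P ^ n * P powi k = of_int b / P ^ j \<and> b mod m = a mod m"
proof (cases "0 \<le> k")
  case True
  then have "of_int a / P ^ n * P powi k = of_int (a * int p ^ nat k) / P ^ n"
    by (simp add: power_int_nonneg_exp)
  then show ?thesis
    using mult_power_p_mod by blast
next
  case False
  then have "of_int a / P ^ n * P powi k = of_int a / P ^ (n + nat (- k))"
    using P_pos by (simp add: power_int_def power_add power_inverse divide_inverse)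
  then show ?thesis
    by blast
qed

lemma Hp_mult_powi:
  assumes "x \<in> Hp p"
  shows "x * P powi k \<in> Hp p"
proof -
  obtain a n where "x = of_int a / P ^ n"
    using assms unfolding Hp_iff by blast
  then show ?thesis
    using of_int_div_mult_powi[of a n k] unfolding Hp_iff by blast
qed

lemma Hp_div_powi: "x \<in> Hp p \<Longrightarrow> x / P powi k \<in> Hp p"
  using Hp_mult_powi[of x "- k"] by (simp add: power_int_minus divide_inverse)

lemma chi_of_int_div: "chi p (of_int a / P ^ n) = a mod m"
  unfolding chi_def
proof (rule the_equality)
  fix r
  assume "\<exists>(b::int) (k::nat). of_int a / P ^ n = of_int b / P ^ k \<and> r = b mod m"
  then obtain b k where eq: "of_int a / P ^ n = of_int b / P ^ k" and r: "r = b mod m"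
    by blast
  have "real_of_int (a * int p ^ k) = real_of_int (b * int p ^ n)"
    using eq P_pos by (simp add: field_simps)
  then have "a * int p ^ k = b * int p ^ n"
    by (simp only: of_int_eq_iff)
  then show "r = a mod m"
    using r mult_power_p_mod[of a k] mult_power_p_mod[of b n] by simp
qed blast

lemma chi_of_int [simp]: "chi p (of_int a) = a mod m"
  using chi_of_int_div[of a 0] by simp

lemma chi_0 [simp]: "chi p 0 = 0"
  using chi_of_int[of 0] by simp

lemma chi_add:
  assumes "x \<in> Hp p" "y \<in> Hp p"
  shows "chi p (x + y) = (chi p x + chi p y) mod m"
proof -
  obtain a n b k where x: "x = of_int a / P ^ n" and y: "y = of_int b / P ^ k"
    using assms unfolding Hp_iff by blast
  have "chi p (x + y) = (a * int p ^ k + b * int p ^ n) mod m"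
    by (simp only: x y of_int_div_add chi_of_int_div)
  also have "\<dots> = (a + b) mod m"
    by (intro mod_add_cong mult_power_p_mod)
  finally show ?thesis
    by (simp add: x y chi_of_int_div mod_add_eq)
qed

lemma chi_mult_of_int:
  assumes "x \<in> Hp p"
  shows "chi p (of_int c * x) = (c * chi p x) mod m"
proof -
  obtain a n where x: "x = of_int a / P ^ n"
    using assms unfolding Hp_iff by blast
  then have "chi p (of_int c * x) = c * a mod m"
    using chi_of_int_div[of "c * a" n] by simp
  then show ?thesis
    by (simp add: x chi_of_int_div mod_mult_right_eq)
qed

lemma chi_uminus: "x \<in> Hp p \<Longrightarrow> chi p (- x) = (- chi p x) mod m"
  using chi_mult_of_int[of x "-1"] by simp

lemma chi_diff: "x \<in> Hp p \<Longrightarrow> y \<in> Hp p \<Longrightarrow> chi p (x - y) = (chi p x - chi p y) mod m"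
  using chi_add[OF _ Hp_uminus, of x y] chi_uminus[of y]
  by (simp add: mod_add_right_eq mod_diff_right_eq)

lemma chi_mult_powi:
  assumes "x \<in> Hp p"
  shows "chi p (x * P powi k) = chi p x"
proof -
  obtain a n where x: "x = of_int a / P ^ n"
    using assms unfolding Hp_iff by blast
  obtain b j where "x * P powi k = of_int b / P ^ j" "b mod m = a mod m"
    using of_int_div_mult_powi[of a n k] x by blast
  then show ?thesis
    by (simp add: x chi_of_int_div)
qed

lemma chi_div_powi: "x \<in> Hp p \<Longrightarrow> chi p (x / P powi k) = chi p x"
  using chi_mult_powi[of x "- k"] by (simp add: power_int_minus divide_inverse)

lemma chi_sum:
  "finite A \<Longrightarrow> (\<And>i. i \<in> A \<Longrightarrow> f i \<in> Hp p) \<Longrightarrow>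
    chi p (\<Sum>i\<in>A. f i) = (\<Sum>i\<in>A. chi p (f i)) mod m"
proof (induction A rule: finite_induct)
  case (insert x A)
  then have "chi p (\<Sum>i\<in>insert x A. f i) = (chi p (f x) + chi p (\<Sum>i\<in>A. f i)) mod m"
    by (simp add: chi_add Hp_sum)
  then show ?case
    using insert by (simp add: mod_add_right_eq)
qed simp

lemma div_p_minus_1_Hp: "x \<in> Hp p \<Longrightarrow> chi p x = 0 \<Longrightarrow> x / (P - 1) \<in> Hp p"
proof -
  assume "x \<in> Hp p" "chi p x = 0"
  then obtain a n where x: "x = of_int a / P ^ n" and "a mod m = 0"
    unfolding Hp_iff by (auto simp: chi_of_int_div)
  then obtain b where "a = m * b"
    by auto
  then have "x / (P - 1) = of_int b / P ^ n"
    using P_gt_1 by (simp add: x)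
  then show ?thesis
    unfolding Hp_iff by blast
qed

end

section \<open>Representatives and orders\<close>

context p_scaling
begin

definition exponent :: "real \<Rightarrow> int" where
  "exponent y = \<lfloor>log P y\<rfloor>"

definition mantissa :: "real \<Rightarrow> real" where
  "mantissa y = y / P powi exponent y"

lemma exponent_eq_iff: "0 < y \<Longrightarrow> exponent y = k \<longleftrightarrow> P powi k \<le> y \<and> y < P powi (k + 1)"
  using floor_log_eq_powr_iff[of y P k] P_gt_1 powr_real_of_int'[of P k] powr_real_of_int'[of P "k + 1"]
  by (simp add: exponent_def)

lemma exponent_bounds: "0 < y \<Longrightarrow> P powi exponent y \<le> y \<and> y < P powi (exponent y + 1)"
  using exponent_eq_iff by blast

lemma exponent_mono: "0 < a \<Longrightarrow> a \<le> b \<Longrightarrow> exponent a \<le> exponent b"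
  unfolding exponent_def using P_gt_1 by (intro floor_mono) simp

lemma mantissa_bounds: "0 < y \<Longrightarrow> 1 \<le> mantissa y \<and> mantissa y < P"
  using exponent_bounds[of y] P_gt_1
  by (simp add: mantissa_def power_int_add field_simps)

lemma mantissa_mult_powi: "y = mantissa y * P powi exponent y"
  using P_pos by (simp add: mantissa_def)

lemma mantissa_eq_div:
  assumes "P powi k \<le> y" "y < P powi (k + 1)"
  shows "mantissa y = y / P powi k"
  using assms exponent_eq_iff[of y k] P_pos
  by (simp add: mantissa_def order.strict_trans2[OF zero_less_power_int])

lemma mantissa_mult_P:
  assumes "0 < y"
  shows "mantissa (P * y) = mantissa y"
proof -
  have bounds: "P powi exponent y \<le> y" "y < P powi (exponent y + 1)"
    using exponent_bounds[OF assms] by auto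
  have "P powi (exponent y + 1) \<le> P * y"
    using mult_left_mono[OF bounds(1), of P] P_pos by (simp add: power_int_add_1')
  moreover have "P * y < P powi (exponent y + 1 + 1)"
    by (subst power_int_add_1') (use mult_strict_left_mono[OF bounds(2) P_pos] in simp_all)
  ultimately have "mantissa (P * y) = P * y / P powi (exponent y + 1)"
    by (rule mantissa_eq_div)
  moreover have "P powi (exponent y + 1) = P * P powi exponent y"
    by (rule power_int_add_1') simp
  then have "P * y / P powi (exponent y + 1) = mantissa y"
    unfolding mantissa_def by simp
  ultimately show ?thesis
    by simp
qed

definition scaled :: "real \<Rightarrow> real set" where
  "scaled l = (\<lambda>x. l * x) ` Hp p"

lemma mem_scaled_iff: "0 < l \<Longrightarrow> v \<in> scaled l \<longleftrightarrow> v / l \<in> Hp p"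
  by (force simp: scaled_def image_iff)

lemma scaled_in_Cp: "0 < l \<Longrightarrow> scaled l \<in> Cp p"
  unfolding Cp_def scaled_def by blast

lemma scal_pos: "H \<in> Cp p \<Longrightarrow> 0 < scal p H"
  and scaled_scal: "H \<in> Cp p \<Longrightarrow> scaled (scal p H) = H"
proof -
  assume "H \<in> Cp p"
  then have "\<exists>l. l > 0 \<and> H = (\<lambda>x. l * x) ` Hp p"
    unfolding Cp_def by blast
  then have "scal p H > 0 \<and> H = (\<lambda>x. scal p H * x) ` Hp p"
    unfolding scal_def by (rule someI_ex)
  then show "0 < scal p H" "scaled (scal p H) = H"
    unfolding scaled_def by auto
qed

lemma mem_Cp_iff: "H \<in> Cp p \<Longrightarrow> v \<in> H \<longleftrightarrow> v / scal p H \<in> Hp p"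
  using mem_scaled_iff[OF scal_pos] scaled_scal by metis

lemma zero_mem_Cp: "H \<in> Cp p \<Longrightarrow> 0 \<in> H"
  by (simp add: mem_Cp_iff)

lemma diff_mem_Cp: "H \<in> Cp p \<Longrightarrow> x \<in> H \<Longrightarrow> y \<in> H \<Longrightarrow> x - y \<in> H"
  by (simp add: mem_Cp_iff diff_divide_distrib Hp_diff)

lemma scaled_mult_powi:
  assumes "0 < l"
  shows "scaled (l * P powi k) = scaled l"
proof -
  have "v / (l * P powi k) \<in> Hp p \<longleftrightarrow> v / l \<in> Hp p" for v
  proof -
    have "v / (l * P powi k) = v / l / P powi k" "v / l = v / (l * P powi k) * P powi k"
      by simp_all
    then show ?thesis
      using Hp_div_powi[of "v / l" k] Hp_mult_powi[of "v / (l * P powi k)" k] by metis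
  qed
  moreover have "0 < l * P powi k"
    using assms by simp
  ultimately show ?thesis
    using assms by (simp add: set_eq_iff mem_scaled_iff)
qed

lemma chiH_0 [simp]: "chiH p H 0 = 0"
  by (simp add: chiH_def)

lemma chiH_diff:
  "H \<in> Cp p \<Longrightarrow> x \<in> H \<Longrightarrow> y \<in> H \<Longrightarrow> chiH p H (x - y) = (chiH p H x - chiH p H y) mod m"
  by (simp add: chiH_def mem_Cp_iff diff_divide_distrib chi_diff)

definition periodic :: "(real \<Rightarrow> real) \<Rightarrow> bool" where
  "periodic f \<longleftrightarrow> (\<forall>x>0. f (P * x) = f x)"

lemma periodic_power:
  assumes "periodic f" "0 < x"
  shows "f (P ^ n * x) = f x"
proof (induction n)
  case (Suc n)
  have "0 < P ^ n * x"
    using assms(2) by simp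
  then show ?case
    using Suc assms(1) unfolding periodic_def by (simp add: mult.assoc)
qed simp

lemma periodic_powi:
  assumes "periodic f" "0 < x"
  shows "f (P powi k * x) = f x"
proof (cases "0 \<le> k")
  case True
  then show ?thesis
    using periodic_power[OF assms] by (simp add: power_int_nonneg_exp)
next
  case False
  define j where "j = nat (- k)"
  have "P powi k * x = x / P ^ j"
    using False by (simp add: power_int_def j_def power_inverse divide_inverse)
  moreover have "f (P ^ j * (x / P ^ j)) = f (x / P ^ j)"
    using assms by (intro periodic_power) auto
  ultimately show ?thesis
    by simp
qed

lemma periodic_affine_scale:
  assumes "periodic f" "0 < u" "\<forall>y\<in>{u..v}. f y = a * y + c"
  shows "\<forall>y\<in>{u * P powi k..v * P powi k}. f y = a / P powi k * y + c"
proof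
  fix y
  assume y: "y \<in> {u * P powi k..v * P powi k}"
  then have "y / P powi k \<in> {u..v}"
    using P_pos by (auto simp: field_simps)
  then have "f (y / P powi k) = a / P powi k * y + c"
    using assms(3) by simp
  moreover have "0 < y"
    using assms(2) y by (auto intro: order.strict_trans2[of 0 "u * P powi k"])
  then have "f (P powi (- k) * y) = f y"
    by (rule periodic_powi[OF assms(1)])
  moreover have "P powi (- k) * y = y / P powi k"
    by (simp add: power_int_minus field_simps)
  ultimately show "f y = a / P powi k * y + c"
    by simp
qed

text \<open>The order of \<open>f\<close> at \<open>H\<close> depends only on the behaviour of \<open>f\<close> near any
  \<open>r\<close> with \<open>H = r H\<^sub>p\<close>: near \<open>scal p H = r p\<^sup>k\<close> periodicity rescales the slopes by \<open>p\<^sup>-\<^sup>k\<close>.\<close>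

lemma Ord_eq_slope_jump:
  assumes H: "H \<in> Cp p" and "periodic f" and scal: "scal p H = r * P powi k"
    and d: "0 < d" "d < r"
    and right: "\<forall>y\<in>{r..r+d}. f y = aR * y + cR"
    and left: "\<forall>y\<in>{r-d..r}. f y = aL * y + cL"
  shows "Ord p H f = r * (aR - aL)"
proof -
  define s where "s = scal p H"
  have s: "0 < s" "0 < d * P powi k"
    using scal_pos[OF H] d by (simp_all add: s_def)
  have right': "\<forall>y\<in>{s..s + d * P powi k}. f y = aR / P powi k * y + cR"
    using periodic_affine_scale[OF assms(2) _ right, of k] d
    by (simp add: s_def scal distrib_right)
  have left': "\<forall>y\<in>{s - d * P powi k..s}. f y = aL / P powi k * y + cL"
    using periodic_affine_scale[OF assms(2) _ left, of k] d
    by (simp add: s_def scal left_diff_distrib)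
  have "Lim (at_right 0) (\<lambda>e. (f ((1 + e) * s) - f s) / e) = aR / P powi k * s"
    by (rule tendsto_Lim[OF _ tendsto_diff_quotient_right[OF s right']]) simp
  moreover have "Lim (at_left 0) (\<lambda>e. (f ((1 + e) * s) - f s) / e) = aL / P powi k * s"
    by (rule tendsto_Lim[OF _ tendsto_diff_quotient_left[OF s left']]) simp
  ultimately have "Ord p H f = aR / P powi k * s - aL / P powi k * s"
    by (simp add: Ord_def Let_def s_def)
  also have "\<dots> = r * (aR - aL)"
    by (simp add: s_def scal right_diff_distrib)
  finally show ?thesis .
qed

end

locale prime_scaling = p_scaling +
  assumes prime_p: "prime p"
begin

lemma Hp_unit_eq_powi:
  assumes "q \<in> Hp p" "0 < q" "inverse q \<in> Hp p"
  shows "\<exists>j. q = P powi j"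
proof -
  obtain a n b k where a: "q = of_int a / P ^ n" and b: "inverse q = of_int b / P ^ k"
    using assms unfolding Hp_iff by blast
  have "0 < a"
    using assms(2) by (simp add: a zero_less_divide_iff)
  have "real_of_int (a * b) = (q * P ^ n) * (inverse q * P ^ k)"
    using a b by simp
  also have "\<dots> = real_of_int (int p ^ (n + k))"
    using assms(2) by (simp add: power_add)
  finally have "a dvd int p ^ (n + k)"
    by (metis dvd_triv_left of_int_eq_iff)
  then have "nat a dvd p ^ (n + k)"
    using \<open>0 < a\<close> by (metis int_dvd_int_iff of_nat_power zero_less_imp_eq_int nat_int)
  then obtain i where "nat a = p ^ i"
    using divides_primepow_nat[OF prime_p] by blast
  then have "real_of_int a = P ^ i"
    using \<open>0 < a\<close> by (metis of_int_of_nat_eq of_nat_power zero_less_imp_eq_int nat_int)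
  then have "q = P powi (int i - int n)"
    by (simp add: a power_int_diff)
  then show ?thesis ..
qed

lemma scaled_eq_imp_powi:
  assumes "0 < a" "0 < b" "scaled a = scaled b"
  shows "\<exists>j. a = b * P powi j"
proof -
  have "a \<in> scaled b" "b \<in> scaled a"
    using assms mem_scaled_iff[of a a] mem_scaled_iff[of b b] by simp_all
  then have "a / b \<in> Hp p" "inverse (a / b) \<in> Hp p"
    using assms mem_scaled_iff[of a b] mem_scaled_iff[of b a] by simp_all
  then obtain j where "a / b = P powi j"
    using Hp_unit_eq_powi assms by fastforce
  then show ?thesis
    using assms(2) by (metis nonzero_mult_div_cancel_left less_irrefl times_divide_eq_right)
qed

lemma scaled_inj:
  assumes x: "1 \<le> x" "x < P" and y: "1 \<le> y" "y < P" and eq: "scaled x = scaled y"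
  shows "x = y"
proof -
  obtain j where j: "x = y * P powi j"
    using scaled_eq_imp_powi[OF _ _ eq] x y by auto
  have "P powi j \<le> x"
    using mult_right_mono[OF y(1), of "P powi j"] j by simp
  then have "P powi j < P powi 1"
    using x by simp
  then have "j < 1"
    by (simp only: power_int_less_iff[OF P_gt_1])
  have "y * P powi j < P * P powi j"
    by (rule mult_strict_right_mono[OF y(2)]) simp
  then have "1 < P * P powi j"
    using j x by linarith
  then have "P powi 0 < P powi (j + 1)"
    by (simp add: power_int_add_1')
  then have "0 < j + 1"
    by (simp only: power_int_less_iff[OF P_gt_1])
  with \<open>j < 1\<close> have "j = 0"
    by linarith
  then show ?thesis
    using j by simp
qed

definition rep :: "real set \<Rightarrow> real" where
  "rep H = mantissa (scal p H)"

lemma rep_bounds: "H \<in> Cp p \<Longrightarrow> 1 \<le> rep H \<and> rep H < P"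
  unfolding rep_def using mantissa_bounds scal_pos by blast

lemma scal_eq_rep_mult_powi: "scal p H = rep H * P powi exponent (scal p H)"
  unfolding rep_def by (rule mantissa_mult_powi)

lemma scaled_rep: "H \<in> Cp p \<Longrightarrow> scaled (rep H) = H"
  using scaled_mult_powi[of "rep H" "exponent (scal p H)"] rep_bounds[of H]
    scal_eq_rep_mult_powi[of H] scaled_scal[of H] by simp

lemma rep_scaled: "1 \<le> x \<Longrightarrow> x < P \<Longrightarrow> rep (scaled x) = x"
  using scaled_in_Cp[of x] rep_bounds[of "scaled x"] scaled_rep[of "scaled x"]
  by (intro scaled_inj) auto

lemma chiH_scaled:
  assumes "0 < l" "v / l \<in> Hp p"
  shows "chiH p (scaled l) v = chi p (v / l)"
proof -
  have H: "scaled l \<in> Cp p"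
    using assms(1) by (rule scaled_in_Cp)
  then obtain j where "scal p (scaled l) = l * P powi j"
    using scaled_eq_imp_powi[OF scal_pos[OF H] assms(1)] scaled_scal[OF H] by auto
  then have "chiH p (scaled l) v = chi p (v / l / P powi j)"
    by (simp add: chiH_def)
  then show ?thesis
    using chi_div_powi[OF assms(2)] by simp
qed

end

section \<open>Divisors\<close>

lemma deg_eq_sum_superset: "finite U \<Longrightarrow> supp D \<subseteq> U \<Longrightarrow> deg D = (\<Sum>H\<in>U. D H)"
  unfolding deg_def by (rule sum.mono_neutral_left) (auto simp: supp_def)

definition point_divisor :: "real set \<Rightarrow> real \<Rightarrow> real set \<Rightarrow> real" where
  "point_divisor H v = (\<lambda>K. if K = H then v else 0)"

lemma supp_point_divisor: "supp (point_divisor H v) \<subseteq> {H}"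
  by (auto simp: supp_def point_divisor_def)

lemma deg_point_divisor: "deg (point_divisor H v) = v"
  using deg_eq_sum_superset[OF _ supp_point_divisor] by (simp add: point_divisor_def)

context p_scaling
begin

lemma chiD_eq_sum_superset:
  "finite U \<Longrightarrow> supp D \<subseteq> U \<Longrightarrow> chiD p D = (\<Sum>H\<in>U. chiH p H (D H)) mod m"
  unfolding chiD_def by (subst sum.mono_neutral_left[of U]) (auto simp: supp_def)

lemma chiD_mod [simp]: "chiD p D mod m = chiD p D"
  by (simp add: chiD_def)

lemma Div_diff:
  assumes "D \<in> Div p" "E \<in> Div p"
  shows "(\<lambda>H. D H - E H) \<in> Div p"
proof -
  have "supp (\<lambda>H. D H - E H) \<subseteq> supp D \<union> supp E"
    by (auto simp: supp_def)
  then show ?thesis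
    using assms diff_mem_Cp by (auto simp: Div_def intro: finite_subset)
qed

lemma deg_diff:
  assumes "D \<in> Div p" "E \<in> Div p"
  shows "deg (\<lambda>H. D H - E H) = deg D - deg E"
proof -
  define U where "U = supp D \<union> supp E"
  have "finite U"
    using assms by (simp add: U_def Div_def)
  moreover have "supp (\<lambda>H. D H - E H) \<subseteq> U" "supp D \<subseteq> U" "supp E \<subseteq> U"
    by (auto simp: U_def supp_def)
  ultimately show ?thesis
    by (simp add: deg_eq_sum_superset sum_subtractf)
qed

lemma chiD_diff:
  assumes "D \<in> Div p" "E \<in> Div p"
  shows "chiD p (\<lambda>H. D H - E H) = (chiD p D - chiD p E) mod m"
proof -
  define U where "U = supp D \<union> supp E"
  have U: "finite U" "supp (\<lambda>H. D H - E H) \<subseteq> U" "supp D \<subseteq> U" "supp E \<subseteq> U"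
    using assms by (auto simp: U_def Div_def supp_def)
  have "chiH p H (D H - E H) = (chiH p H (D H) - chiH p H (E H)) mod m" for H
    using assms chiH_diff[of H] by (cases "H \<in> Cp p") (auto simp: Div_def)
  then have "chiD p (\<lambda>H. D H - E H) = (\<Sum>H\<in>U. (chiH p H (D H) - chiH p H (E H)) mod m) mod m"
    using chiD_eq_sum_superset[OF U(1,2)] by simp
  also have "\<dots> = ((\<Sum>H\<in>U. chiH p H (D H)) - (\<Sum>H\<in>U. chiH p H (E H))) mod m"
    by (simp add: mod_sum_eq sum_subtractf)
  also have "\<dots> = (chiD p D - chiD p E) mod m"
    using chiD_eq_sum_superset[OF U(1,3)] chiD_eq_sum_superset[OF U(1,4)] by (simp add: mod_diff_eq)
  finally show ?thesis .
qed

lemma chiD_diff_eq_0_iff: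
  "D \<in> Div p \<Longrightarrow> E \<in> Div p \<Longrightarrow> chiD p (\<lambda>H. D H - E H) = 0 \<longleftrightarrow> chiD p D = chiD p E"
  using mod_eq_dvd_iff[of "chiD p D" m "chiD p E"] by (simp add: chiD_diff dvd_eq_mod_eq_0)

lemma point_divisor_in_Div: "H \<in> Cp p \<Longrightarrow> v \<in> H \<Longrightarrow> point_divisor H v \<in> Div p"
  using finite_subset[OF supp_point_divisor] zero_mem_Cp
  by (auto simp: Div_def point_divisor_def)

lemma chiD_point_divisor: "chiD p (point_divisor H v) = chiH p H v mod m"
  using chiD_eq_sum_superset[OF _ supp_point_divisor] by (simp add: point_divisor_def)

end

context prime_scaling
begin

lemma ex_divisor_deg_chiD_0: "\<exists>D\<in>Div p. deg D = y \<and> chiD p D = 0"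
proof -
  define l where "l = (if y = 0 then 1 else \<bar>y\<bar> / (P - 1))"
  have l: "0 < l"
    using P_gt_1 by (simp add: l_def)
  obtain k :: int where k: "y / l = of_int (k * m)"
  proof (cases "y = 0")
    case False
    then have "y / l = of_int ((if y < 0 then -1 else 1) * m)"
      using P_gt_1 by (auto simp: l_def abs_if)
    then show ?thesis
      using that by blast
  qed (use that[of 0] in \<open>simp add: l_def\<close>)
  have y: "y / l \<in> Hp p"
    unfolding k by (rule Hp_of_int)
  have "chiH p (scaled l) y = chi p (y / l)"
    by (rule chiH_scaled[OF l y])
  also have "\<dots> = 0"
    unfolding k chi_of_int by simp
  finally show ?thesis
    using l y by (intro bexI[of _ "point_divisor (scaled l) y"])
      (auto simp: mem_scaled_iff deg_point_divisor chiD_point_divisor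
        intro!: point_divisor_in_Div scaled_in_Cp)
qed

lemma ex_divisor_deg_chiD:
  assumes "c \<in> {0..<m}"
  shows "\<exists>D\<in>Div p. deg D = r \<and> chiD p D = c"
proof -
  define D1 where "D1 = point_divisor (scaled 1) (of_int c)"
  have D1: "D1 \<in> Div p" "deg D1 = of_int c" "chiD p D1 = c"
    using assms by (auto simp: D1_def mem_scaled_iff chiH_scaled deg_point_divisor chiD_point_divisor
        intro!: point_divisor_in_Div scaled_in_Cp)
  obtain D2 where D2: "D2 \<in> Div p" "deg D2 = of_int c - r" "chiD p D2 = 0"
    using ex_divisor_deg_chiD_0 by blast
  show ?thesis
    using assms D1 D2 by (intro bexI[of _ "\<lambda>H. D1 H - D2 H"]) (simp_all add: deg_diff chiD_diff Div_diff)
qed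

end

section \<open>Principal divisors have degree \<open>0\<close> and trivial character\<close>

locale periodic_pw_affine = prime_scaling +
  fixes f :: "real \<Rightarrow> real" and ts :: "real list" and sl ic :: "nat \<Rightarrow> real"
  assumes f_periodic: "periodic f"
    and sorted_ts: "sorted_wrt (<) ts" and length_ts: "2 \<le> length ts"
    and hd_ts: "hd ts = 1" and last_ts: "last ts = P"
    and slope_Hp: "Suc i < length ts \<Longrightarrow> sl i \<in> Hp p"
    and affine_piece: "Suc i < length ts \<Longrightarrow> y \<in> {ts ! i..ts ! Suc i} \<Longrightarrow> f y = sl i * y + ic i"
begin

definition n :: nat where
  "n = length ts - 1"

abbreviation t :: "nat \<Rightarrow> real" where
  "t i \<equiv> ts ! i"

lemma length_ts_eq: "length ts = Suc n"
  using length_ts by (simp add: n_def)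

lemma n_pos: "0 < n"
  using length_ts by (simp add: n_def)

lemma t_0: "t 0 = 1"
  using hd_ts length_ts by (cases ts) auto

lemma t_n: "t n = P"
proof -
  have "ts \<noteq> []"
    using length_ts by auto
  then show ?thesis
    using last_conv_nth[of ts] last_ts by (simp add: n_def)
qed

lemma last_piece: "n - 1 < n" "Suc (n - 1) = n"
  using n_pos by auto

lemma t_less: "i < j \<Longrightarrow> j \<le> n \<Longrightarrow> t i < t j"
  using sorted_wrt_nth_less[OF sorted_ts, of i j] length_ts_eq by simp

lemma t_le: "i \<le> j \<Longrightarrow> j \<le> n \<Longrightarrow> t i \<le> t j"
  using t_less[of i j] by (cases "i = j") auto

lemma t_bounds: "i < n \<Longrightarrow> 1 \<le> t i \<and> t i < P"
  using t_le[of 0 i] t_less[of i n] t_0 t_n by simp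

lemma t_inj: "i < n \<Longrightarrow> j < n \<Longrightarrow> t i = t j \<Longrightarrow> i = j"
  using t_less[of i j] t_less[of j i] by (cases i j rule: linorder_cases) auto

lemma affine_on_piece: "i < n \<Longrightarrow> y \<in> {t i..t (Suc i)} \<Longrightarrow> f y = sl i * y + ic i"
  using affine_piece[of i y] length_ts_eq by simp

lemma find_piece:
  assumes "1 \<le> r" "r < P"
  shows "\<exists>i<n. t i \<le> r \<and> r < t (Suc i)"
proof -
  define S where "S = {j. j < n \<and> t j \<le> r}"
  define i where "i = Max S"
  have fin: "finite S" and "0 \<in> S"
    using n_pos t_0 assms by (auto simp: S_def)
  then have "i \<in> S"
    unfolding i_def by (intro Max_in) auto
  then have i: "i < n" "t i \<le> r"
    by (simp_all add: S_def)
  have "r < t (Suc i)"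
  proof (cases "Suc i < n")
    case True
    have "Suc i \<notin> S"
      using Max_ge[OF fin, of "Suc i"] by (auto simp: i_def)
    then show ?thesis
      using True by (simp add: S_def)
  next
    case False
    then have "Suc i = n"
      using i by simp
    then show ?thesis
      using t_n assms by simp
  qed
  then show ?thesis
    using i by blast
qed

text \<open>At the breakpoint \<open>1\<close> the piece to the left is the last piece transported by
  periodicity, whose slope is \<open>P * sl (n - 1)\<close>.\<close>

definition slope_jump :: "nat \<Rightarrow> real" where
  "slope_jump i = (if i = 0 then sl 0 - P * sl (n - 1) else sl i - sl (i - 1))"

lemma slope_in_Hp: "i < n \<Longrightarrow> sl i \<in> Hp p"
  using slope_Hp[of i] length_ts_eq by simp

lemma slope_jump_Hp: "i < n \<Longrightarrow> slope_jump i \<in> Hp p"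
  using slope_in_Hp[of i] slope_in_Hp[of "i - 1"] slope_in_Hp[of 0] slope_in_Hp[of "n - 1"] n_pos
  by (auto simp: slope_jump_def intro!: Hp_diff Hp_mult)

lemma Ord_at_inner_breakpoint:
  assumes H: "H \<in> Cp p" and i: "0 < i" "i < n" and r: "rep H = t i"
  shows "Ord p H f = t i * slope_jump i"
proof -
  define d where "d = min (t (Suc i) - t i) (t i - t (i - 1))"
  have d: "d \<le> t (Suc i) - t i" "d \<le> t i - t (i - 1)"
    by (simp_all add: d_def)
  have "0 < d"
    using t_less[of i "Suc i"] t_less[of "i - 1" i] i by (simp add: d_def)
  moreover have "1 \<le> t (i - 1)"
    using t_bounds[of "i - 1"] i by simp
  then have "d < t i"
    using d(2) by linarith
  moreover have "\<forall>y\<in>{t i..t i + d}. f y = sl i * y + ic i"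
    using affine_on_piece[OF i(2)] d(1) by simp
  moreover have "\<forall>y\<in>{t i - d..t i}. f y = sl (i - 1) * y + ic (i - 1)"
    using affine_on_piece[of "i - 1"] i d(2) by simp
  ultimately have "Ord p H f = t i * (sl i - sl (i - 1))"
    using scal_eq_rep_mult_powi[of H] r by (intro Ord_eq_slope_jump[OF H f_periodic]) auto
  then show ?thesis
    using i by (simp add: slope_jump_def)
qed

lemma Ord_at_1:
  assumes H: "H \<in> Cp p" and r: "rep H = 1"
  shows "Ord p H f = slope_jump 0"
proof -
  have last: "t (n - 1) < P"
    using last_piece t_bounds[of "n - 1"] by auto
  define d where "d = min (1 / 2) (min (t 1 - 1) (1 - t (n - 1) / P))"
  have d: "d \<le> 1 / 2" "d \<le> t 1 - 1" "d \<le> 1 - t (n - 1) / P"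
    unfolding d_def by (rule min.cobounded1, (intro min.coboundedI2 min.cobounded1 min.cobounded2)+)
  have "0 < d"
    using t_less[of 0 1] t_0 n_pos last P_pos by (simp add: d_def field_simps)
  moreover have "d < 1"
    using d(1) by linarith
  moreover have "\<forall>y\<in>{1..1 + d}. f y = sl 0 * y + ic 0"
    using affine_on_piece[OF n_pos] t_0 d(2) by simp
  moreover have "\<forall>y\<in>{1 - d..1}. f y = (P * sl (n - 1)) * y + ic (n - 1)"
  proof
    fix y
    assume y: "y \<in> {1 - d..1}"
    have "P * (1 - d) \<le> P * y" "P * y \<le> P * 1"
      using y P_pos by (auto intro!: mult_left_mono)
    moreover have "t (n - 1) \<le> P * (1 - d)"
      using d(3) P_pos by (simp add: field_simps)
    ultimately have "t (n - 1) \<le> P * y" "P * y \<le> t (Suc (n - 1))"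
      using last_piece(2) t_n by (auto intro: order_trans)
    then have "P * y \<in> {t (n - 1)..t (Suc (n - 1))}"
      by simp
    moreover have "0 < y"
      using y d(1) by simp
    then have "f y = f (P * y)"
      using f_periodic by (simp add: periodic_def)
    ultimately show "f y = (P * sl (n - 1)) * y + ic (n - 1)"
      using affine_on_piece[OF last_piece(1), of "P * y"] by simp
  qed
  ultimately have "Ord p H f = 1 * (sl 0 - P * sl (n - 1))"
    using scal_eq_rep_mult_powi[of H] r by (intro Ord_eq_slope_jump[OF H f_periodic]) auto
  then show ?thesis
    by (simp add: slope_jump_def)
qed

lemma Ord_at_breakpoint: "H \<in> Cp p \<Longrightarrow> i < n \<Longrightarrow> rep H = t i \<Longrightarrow> Ord p H f = t i * slope_jump i"
  using Ord_at_inner_breakpoint Ord_at_1 t_0 by (cases "i = 0") auto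

lemma Ord_off_breakpoints:
  assumes H: "H \<in> Cp p" and r: "\<forall>i<n. rep H \<noteq> t i"
  shows "Ord p H f = 0"
proof -
  obtain i where i: "i < n" "t i < rep H" "rep H < t (Suc i)"
    using find_piece rep_bounds[OF H] r by (metis order_le_less)
  define d where "d = min (t (Suc i) - rep H) (rep H - t i)"
  have d: "d \<le> t (Suc i) - rep H" "d \<le> rep H - t i"
    by (simp_all add: d_def)
  have "0 < d" "d < rep H"
    using i t_bounds[of i] d by (auto simp: d_def)
  moreover have "\<forall>y\<in>{rep H - d..rep H + d}. f y = sl i * y + ic i"
    using affine_on_piece[OF i(1)] d by simp
  ultimately have "Ord p H f = rep H * (sl i - sl i)"
    using scal_eq_rep_mult_powi[of H] by (intro Ord_eq_slope_jump[OF H f_periodic]) auto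
  then show ?thesis
    by simp
qed

text \<open>Continuity at the breakpoints makes the weighted slope jumps telescope.\<close>

lemma sum_weighted_slope_jumps: "(\<Sum>i<n. t i * slope_jump i) = 0"
proof -
  have inner: "t i * slope_jump i = ic (i - 1) - ic i" if "0 < i" "i < n" for i
  proof -
    have "t i \<in> {t (i - 1)..t (Suc (i - 1))}" "t i \<in> {t i..t (Suc i)}"
      using that t_le[of "i - 1" i] t_le[of i "Suc i"] by auto
    then have "sl (i - 1) * t i + ic (i - 1) = sl i * t i + ic i"
      using that affine_on_piece[of "i - 1" "t i"] affine_on_piece[of i "t i"] by simp
    then show ?thesis
      using that by (simp add: slope_jump_def algebra_simps)
  qed
  have "1 \<in> {t 0..t 1}"
    using t_0 t_le[of 0 1] n_pos by simp
  then have "f 1 = sl 0 + ic 0"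
    using affine_on_piece[OF n_pos, of 1] by simp
  moreover have "P \<in> {t (n - 1)..t (Suc (n - 1))}"
    using t_le[of "n - 1" n] t_n last_piece by simp
  then have "f P = sl (n - 1) * P + ic (n - 1)"
    using affine_on_piece[OF last_piece(1)] by simp
  moreover have "f P = f 1"
    using f_periodic[unfolded periodic_def, rule_format, of 1] by simp
  ultimately have first: "t 0 * slope_jump 0 = ic (n - 1) - ic 0"
    by (simp add: t_0 slope_jump_def algebra_simps)
  obtain k where k: "n = Suc k"
    using n_pos by (cases n) auto
  have "(\<Sum>i<n. t i * slope_jump i) = t 0 * slope_jump 0 + (\<Sum>i<k. t (Suc i) * slope_jump (Suc i))"
    unfolding k by (rule sum.lessThan_Suc_shift)
  also have "(\<Sum>i<k. t (Suc i) * slope_jump (Suc i)) = (\<Sum>i<k. ic i - ic (Suc i))"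
    using inner k by (intro sum.cong) auto
  also have "t 0 * slope_jump 0 + (\<Sum>i<k. ic i - ic (Suc i)) = 0"
    using first k by (simp add: sum_lessThan_telescope')
  finally show ?thesis .
qed

lemma sum_slope_jumps: "(\<Sum>i<n. slope_jump i) = of_int (- m) * sl (n - 1)"
proof -
  obtain k where k: "n = Suc k"
    using n_pos by (cases n) auto
  then have "(\<Sum>i<n. slope_jump i) = slope_jump 0 + (\<Sum>i<k. slope_jump (Suc i))"
    by (simp only: sum.lessThan_Suc_shift)
  also have "\<dots> = sl 0 - P * sl k + (\<Sum>i<k. sl (Suc i) - sl i)"
    using k by (simp add: slope_jump_def)
  finally show ?thesis
    using k by (simp add: sum_lessThan_telescope algebra_simps)
qed

lemma chi_sum_slope_jumps: "chi p (\<Sum>i<n. slope_jump i) = 0"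
proof -
  have sl: "sl (n - 1) \<in> Hp p"
    using slope_in_Hp[of "n - 1"] n_pos by simp
  show ?thesis
    unfolding sum_slope_jumps chi_mult_of_int[OF sl]
    by (rule dvd_imp_mod_0, rule dvd_mult2) (simp only: dvd_minus_iff dvd_refl)
qed

abbreviation breakpoints :: "real set set" where
  "breakpoints \<equiv> (\<lambda>i. scaled (t i)) ` {..<n}"

lemma scaled_t_in_Cp: "i < n \<Longrightarrow> scaled (t i) \<in> Cp p"
  using t_bounds[of i] by (intro scaled_in_Cp) auto

lemma rep_scaled_t: "i < n \<Longrightarrow> rep (scaled (t i)) = t i"
  using t_bounds[of i] by (intro rep_scaled) auto

lemma principal_at_breakpoint: "i < n \<Longrightarrow> principal p f (scaled (t i)) = t i * slope_jump i"
  using Ord_at_breakpoint[of "scaled (t i)" i] scaled_t_in_Cp[of i] rep_scaled_t[of i]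
  by (simp add: principal_def)

lemma principal_off_breakpoints: "H \<notin> breakpoints \<Longrightarrow> principal p f H = 0"
  using Ord_off_breakpoints[of H] scaled_rep[of H] by (force simp: principal_def)

lemma chiH_at_breakpoint:
  assumes "i < n"
  shows "chiH p (scaled (t i)) (t i * slope_jump i) = chi p (slope_jump i)"
proof -
  have "0 < t i"
    using t_bounds[OF assms] by simp
  then show ?thesis
    using chiH_scaled[of "t i" "t i * slope_jump i"] slope_jump_Hp[OF assms] by simp
qed

lemma supp_principal_subset: "supp (principal p f) \<subseteq> breakpoints"
  using principal_off_breakpoints by (auto simp: supp_def)

lemma inj_on_breakpoints: "inj_on (\<lambda>i. scaled (t i)) {..<n}"
  by (rule inj_onI) (metis lessThan_iff rep_scaled_t t_inj)

lemma principal_in_Div: "principal p f \<in> Div p"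
  unfolding Div_def
proof (intro CollectI conjI ballI allI impI)
  fix H
  assume H: "H \<in> Cp p"
  show "principal p f H \<in> H"
  proof (cases "H \<in> breakpoints")
    case True
    then obtain i where i: "i < n" "H = scaled (t i)"
      by blast
    then show ?thesis
      using principal_at_breakpoint[OF i(1)] slope_jump_Hp[OF i(1)] t_bounds[OF i(1)]
      by (simp add: mem_scaled_iff)
  qed (simp add: principal_off_breakpoints zero_mem_Cp[OF H])
next
  show "finite (supp (principal p f))"
    using supp_principal_subset finite_subset by blast
qed (simp add: principal_def)

lemma deg_principal: "deg (principal p f) = 0"
proof -
  have "deg (principal p f) = (\<Sum>H\<in>breakpoints. principal p f H)"
    by (rule deg_eq_sum_superset[OF _ supp_principal_subset]) simp
  also have "\<dots> = (\<Sum>i<n. principal p f (scaled (t i)))"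
    by (rule sum.reindex[OF inj_on_breakpoints, unfolded comp_def])
  also have "\<dots> = (\<Sum>i<n. t i * slope_jump i)"
    by (rule sum.cong) (simp_all add: principal_at_breakpoint)
  finally show ?thesis
    using sum_weighted_slope_jumps by simp
qed

lemma chiD_principal: "chiD p (principal p f) = 0"
proof -
  have "chiD p (principal p f) = (\<Sum>H\<in>breakpoints. chiH p H (principal p f H)) mod m"
    by (rule chiD_eq_sum_superset[OF _ supp_principal_subset]) simp
  also have "\<dots> = (\<Sum>i<n. chiH p (scaled (t i)) (principal p f (scaled (t i)))) mod m"
    by (simp only: sum.reindex[OF inj_on_breakpoints, unfolded comp_def])
  also have "\<dots> = (\<Sum>i<n. chi p (slope_jump i)) mod m"
    by (intro arg_cong[where f = "\<lambda>x. x mod m"] sum.cong)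
      (simp_all add: principal_at_breakpoint chiH_at_breakpoint)
  also have "\<dots> = chi p (\<Sum>i<n. slope_jump i)"
    by (rule chi_sum[symmetric]) (simp_all add: slope_jump_Hp)
  finally show ?thesis
    using chi_sum_slope_jumps by simp
qed

end

context prime_scaling
begin

lemma principal_in_Div_deg_chiD:
  assumes "f \<in> K p"
  shows "principal p f \<in> Div p \<and> deg (principal p f) = 0 \<and> chiD p (principal p f) = 0"
proof -
  have "piecewise_affine_Hp p f"
    using assms by (simp add: K_def)
  from this[unfolded piecewise_affine_Hp_def, rule_format, OF zero_less_one P_gt_1]
  obtain ts where ts: "sorted_wrt (<) ts" "2 \<le> length ts" "hd ts = 1" "last ts = P"
    and pieces: "\<forall>i. Suc i < length ts \<longrightarrow>
      (\<exists>s\<in>Hp p. \<exists>c. \<forall>x\<in>{ts ! i..ts ! Suc i}. f x = s * x + c)"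
    by blast
  then have "\<forall>i. \<exists>sc. Suc i < length ts \<longrightarrow>
      fst sc \<in> Hp p \<and> (\<forall>x\<in>{ts ! i..ts ! Suc i}. f x = fst sc * x + snd sc)"
    by fastforce
  then obtain sc where "\<And>i. Suc i < length ts \<Longrightarrow>
      fst (sc i) \<in> Hp p \<and> (\<forall>x\<in>{ts ! i..ts ! Suc i}. f x = fst (sc i) * x + snd (sc i))"
    by metis
  then interpret periodic_pw_affine p f ts "\<lambda>i. fst (sc i)" "\<lambda>i. snd (sc i)"
    using assms ts by unfold_locales (auto simp: K_def periodic_def)
  show ?thesis
    using principal_in_Div deg_principal chiD_principal by blast
qed

end

section \<open>Divisors of degree \<open>0\<close> and trivial character are principal\<close>

locale balanced_divisor = prime_scaling +
  fixes D :: "real set \<Rightarrow> real"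
  assumes D_Div: "D \<in> Div p" and deg_D: "deg D = 0" and chiD_D: "chiD p D = 0"
begin

definition nodes :: "real set" where
  "nodes = insert 1 (rep ` supp D)"

definition val :: "real \<Rightarrow> real" where
  "val z = D (scaled z)"

definition tail :: real where
  "tail = (\<Sum>z\<in>nodes - {1}. val z / z)"

text \<open>The slope at \<open>1\<close> is chosen so that \<open>g P = 0 = g 1\<close>; that it lies in \<open>H\<^sub>p\<close> is
  exactly the condition \<open>\<chi>(D) = 0\<close>, and \<open>g P = 0\<close> uses \<open>deg D = 0\<close>.\<close>

definition coeff :: "real \<Rightarrow> real" where
  "coeff z = (if z = 1 then - (val 1 + P * tail) / (P - 1) else val z / z)"

definition g :: "real \<Rightarrow> real" where
  "g y = (\<Sum>z\<in>nodes. coeff z * max 0 (y - z))"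

definition F :: "real \<Rightarrow> real" where
  "F y = g (mantissa y)"

lemma finite_nodes: "finite nodes"
  using D_Div by (simp add: nodes_def Div_def)

lemma one_in_nodes: "1 \<in> nodes"
  by (simp add: nodes_def)

lemma supp_D_in_Cp: "H \<in> supp D \<Longrightarrow> H \<in> Cp p"
  using D_Div by (auto simp: Div_def supp_def)

lemma nodes_bounds: "z \<in> nodes \<Longrightarrow> 1 \<le> z \<and> z < P"
  using P_gt_1 rep_bounds supp_D_in_Cp by (auto simp: nodes_def)

lemma val_div_Hp:
  assumes "z \<in> nodes"
  shows "val z / z \<in> Hp p"
proof -
  have "0 < z"
    using nodes_bounds[OF assms] by simp
  then have "D (scaled z) \<in> scaled z"
    using D_Div scaled_in_Cp[of z] by (simp add: Div_def)
  then show ?thesis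
    using mem_scaled_iff[OF \<open>0 < z\<close>] by (simp add: val_def)
qed

lemma inj_on_scaled_nodes: "inj_on scaled nodes"
  using scaled_inj nodes_bounds by (meson inj_onI)

lemma supp_D_subset: "supp D \<subseteq> scaled ` nodes"
  using scaled_rep supp_D_in_Cp by (force simp: nodes_def)

lemma sum_nodes_remove_1: "(\<Sum>z\<in>nodes. h z) = h 1 + (\<Sum>z\<in>nodes - {1}. h z)"
  using sum.remove[OF finite_nodes one_in_nodes] by simp

lemma sum_val: "(\<Sum>z\<in>nodes. val z) = 0"
  using deg_eq_sum_superset[OF _ supp_D_subset] finite_nodes deg_D
  by (simp add: sum.reindex[OF inj_on_scaled_nodes] val_def)

lemma chi_sum_val: "chi p (\<Sum>z\<in>nodes. val z / z) = 0"
proof -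
  have "chiH p (scaled z) (D (scaled z)) = chi p (val z / z)" if "z \<in> nodes" for z
    using chiH_scaled[of z] nodes_bounds[OF that] val_div_Hp[OF that] by (simp add: val_def)
  then have "chiD p D = (\<Sum>z\<in>nodes. chi p (val z / z)) mod m"
    using chiD_eq_sum_superset[OF _ supp_D_subset] finite_nodes
    by (simp add: sum.reindex[OF inj_on_scaled_nodes])
  then show ?thesis
    using chiD_D chi_sum[OF finite_nodes val_div_Hp] by simp
qed

lemma coeff_Hp: "z \<in> nodes \<Longrightarrow> coeff z \<in> Hp p"
proof (cases "z = 1")
  case True
  have tail: "tail \<in> Hp p"
    unfolding tail_def by (rule Hp_sum) (simp add: val_div_Hp)
  have "chi p (val 1 + P * tail) = chi p (val 1 + tail)"
    using val_div_Hp[OF one_in_nodes] tail chi_mult_powi[OF tail, of 1]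
    by (simp add: chi_add Hp_mult mult.commute)
  also have "val 1 + tail = (\<Sum>z\<in>nodes. val z / z)"
    by (simp add: sum_nodes_remove_1 tail_def)
  finally have "(val 1 + P * tail) / (P - 1) \<in> Hp p"
    using val_div_Hp[OF one_in_nodes] tail chi_sum_val
    by (intro div_p_minus_1_Hp Hp_add Hp_mult) simp_all
  moreover have "coeff z = - ((val 1 + P * tail) / (P - 1))"
    using True by (simp add: coeff_def diff_divide_distrib add_divide_distrib)
  ultimately show ?thesis
    by (simp only: Hp_uminus)
qed (simp add: coeff_def val_div_Hp)

lemma coeff_1_mult: "coeff 1 * (P - 1) = - (val 1 + P * tail)"
  using P_gt_1 by (simp add: coeff_def)

lemma g_1: "g 1 = 0"
  using nodes_bounds by (auto simp: g_def intro: sum.neutral)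

lemma g_P: "g P = 0"
proof -
  have summand: "coeff z * (P - z) = P * (val z / z) - val z" if "z \<in> nodes - {1}" for z
  proof -
    have "z \<noteq> 0"
      using that nodes_bounds[of z] by auto
    then show ?thesis
      using that by (simp add: coeff_def field_simps)
  qed
  have "(\<Sum>z\<in>nodes - {1}. coeff z * (P - z)) = (\<Sum>z\<in>nodes - {1}. P * (val z / z) - val z)"
    by (rule sum.cong[OF refl summand])
  also have "\<dots> = P * tail - (\<Sum>z\<in>nodes - {1}. val z)"
    by (simp add: tail_def sum_subtractf sum_distrib_left)
  finally have rest: "(\<Sum>z\<in>nodes - {1}. coeff z * (P - z)) = P * tail - (\<Sum>z\<in>nodes - {1}. val z)" .
  have "g P = (\<Sum>z\<in>nodes. coeff z * (P - z))"
    using nodes_bounds by (auto simp: g_def intro: sum.cong)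
  also have "\<dots> = coeff 1 * (P - 1) + (\<Sum>z\<in>nodes - {1}. coeff z * (P - z))"
    by (rule sum_nodes_remove_1)
  also have "\<dots> = - (val 1 + (\<Sum>z\<in>nodes - {1}. val z))"
    by (simp add: rest coeff_1_mult)
  also have "\<dots> = 0"
    using sum_val by (simp add: sum_nodes_remove_1)
  finally show ?thesis .
qed

lemma F_eq_g_div:
  assumes "y \<in> {P powi k..P powi (k + 1)}"
  shows "F y = g (y / P powi k)"
proof (cases "y < P powi (k + 1)")
  case True
  then show ?thesis
    using assms by (simp add: F_def mantissa_eq_div)
next
  case False
  then have y: "y = P powi (k + 1)"
    using assms by simp
  have "P powi (k + 1) < P powi (k + 1 + 1)"
    using P_gt_1 by (simp add: power_int_less_iff)
  then have "mantissa y = 1"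
    using mantissa_eq_div[of "k + 1" y] y by simp
  moreover have "y / P powi k = P"
    using y by (simp add: power_int_add_1)
  ultimately show ?thesis
    using g_1 g_P by (simp add: F_def)
qed

lemma F_eq_g: "y \<in> {1..P} \<Longrightarrow> F y = g y"
  using F_eq_g_div[of y 0] by simp

lemma F_periodic: "periodic F"
  by (simp add: periodic_def F_def mantissa_mult_P)

lemma F_continuous: "continuous_on {0<..} F"
proof -
  have g: "continuous_on A g" for A
    unfolding g_def by (intro continuous_intros)
  have piece: "continuous_on {P powi k..P powi (k + 1)} F" for k
  proof -
    have "continuous_on {P powi k..P powi (k + 1)} (\<lambda>y. g (y / P powi k))"
      by (rule continuous_on_compose2[OF g[of UNIV]]) (auto intro!: continuous_intros)
    then show ?thesis
      by (rule continuous_on_eq) (simp add: F_eq_g_div)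
  qed
  show ?thesis
  proof (rule continuous_at_imp_continuous_on, intro ballI)
    fix y :: real
    assume "y \<in> {0<..}"
    define k where "k = exponent y"
    have "continuous_on ({P powi (k - 1)..P powi (k - 1 + 1)} \<union> {P powi k..P powi (k + 1)}) F"
      by (intro continuous_on_closed_Un piece) auto
    then have "continuous_on {P powi (k - 1)<..<P powi (k + 1)} F"
      by (rule continuous_on_subset) auto
    moreover have "y \<in> {P powi (k - 1)<..<P powi (k + 1)}"
      using exponent_bounds[of y] \<open>y \<in> {0<..}\<close> power_int_less_iff[OF P_gt_1, of "k - 1" k]
      by (auto simp: k_def)
    ultimately show "isCont F y"
      by (simp add: continuous_on_eq_continuous_at)
  qed
qed

lemma F_affine_between_nodes:
  assumes uv: "P powi k \<le> u" "u < v" "v \<le> P powi (k + 1)"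
    and gap: "\<forall>z\<in>nodes. \<not> (u < z * P powi k \<and> z * P powi k < v)"
  shows "\<exists>s\<in>Hp p. \<exists>c. \<forall>x\<in>{u..v}. F x = s * x + c"
proof -
  define A where "A = (\<Sum>z\<in>{z\<in>nodes. z \<le> u / P powi k}. coeff z)"
  define B where "B = (\<Sum>z\<in>{z\<in>nodes. z \<le> u / P powi k}. coeff z * z)"
  have gap': "\<forall>z\<in>nodes. \<not> (u / P powi k < z \<and> z < v / P powi k)"
    using gap by (simp add: field_simps)
  have affine: "F x = A / P powi k * x + - B" if "x \<in> {u..v}" for x
  proof -
    have "F x = g (x / P powi k)"
      using that uv by (intro F_eq_g_div) auto
    also have "\<dots> = A * (x / P powi k) - B"
      unfolding g_def A_def B_def
      by (rule sum_hinge_eq_affine[OF finite_nodes gap']) (use that in \<open>auto simp: divide_right_mono\<close>)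
    finally show ?thesis
      by simp
  qed
  have "A / P powi k \<in> Hp p"
    unfolding A_def using coeff_Hp by (intro Hp_div_powi Hp_sum) auto
  then show ?thesis
    using affine by (intro bexI[of _ "A / P powi k"] exI[of _ "- B"] ballI)
qed

lemma F_piecewise_affine: "piecewise_affine_Hp p F"
proof (rule piecewise_affine_HpI)
  fix a b :: real
  assume ab: "0 < a" "a < b"
  define Z where "Z = (\<lambda>(z, k). z * P powi k) ` (nodes \<times> {exponent a..exponent b + 1})"
  have affine: "\<exists>s\<in>Hp p. \<exists>c. \<forall>x\<in>{u..v}. F x = s * x + c"
    if uv: "a \<le> u" "u < v" "v \<le> b" and gap: "\<forall>z\<in>Z. \<not> (u < z \<and> z < v)" for u v
  proof -
    define k where "k = exponent u"
    have k: "exponent a \<le> k" "k \<le> exponent b"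
      using exponent_mono ab uv by (auto simp: k_def)
    have Z: "z * P powi j \<in> Z" if "z \<in> nodes" "j \<in> {k, k + 1}" for z j
      using that k unfolding Z_def by (intro image_eqI[of _ _ "(z, j)"]) auto
    have "P powi (k + 1) \<in> Z" "u < P powi (k + 1)"
      using Z[OF one_in_nodes, of "k + 1"] exponent_bounds[of u] uv ab by (simp_all add: k_def)
    then have "v \<le> P powi (k + 1)"
      using gap by (meson not_le)
    moreover have "P powi k \<le> u"
      using exponent_bounds[of u] uv ab by (simp add: k_def)
    ultimately show ?thesis
      using uv gap Z by (intro F_affine_between_nodes) auto
  qed
  have "finite Z"
    using finite_nodes by (simp add: Z_def)
  then show "\<exists>Z. finite Z \<and> (\<forall>u v. a \<le> u \<longrightarrow> u < v \<longrightarrow> v \<le> b \<longrightarrow>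
      (\<forall>z\<in>Z. \<not> (u < z \<and> z < v)) \<longrightarrow> (\<exists>s\<in>Hp p. \<exists>c. \<forall>x\<in>{u..v}. F x = s * x + c))"
    using affine by (intro exI[of _ Z] conjI allI impI)
qed

lemma F_in_K: "F \<in> K p"
  using F_continuous F_piecewise_affine F_periodic by (simp add: K_def periodic_def)

lemma F_affine_right:
  assumes "1 \<le> r" "r < P"
  shows "\<exists>d>0. \<exists>e. \<forall>y\<in>{r..r+d}. F y = (\<Sum>z\<in>{z\<in>nodes. z \<le> r}. coeff z) * y + e"
proof -
  obtain d e where d: "0 < d"
    and g: "\<forall>y\<in>{r..r+d}. g y = (\<Sum>z\<in>{z\<in>nodes. z \<le> r}. coeff z) * y + e"
    unfolding g_def using sum_hinge_affine_right[OF finite_nodes] by blast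
  define d' where "d' = min d (P - r)"
  have d': "0 < d'" "d' \<le> d" "d' \<le> P - r"
    using d assms by (simp_all add: d'_def)
  have "F y = (\<Sum>z\<in>{z\<in>nodes. z \<le> r}. coeff z) * y + e" if "y \<in> {r..r + d'}" for y
    using that assms d' g F_eq_g[of y] by simp
  then show ?thesis
    by (intro exI[of _ d'] conjI[OF d'(1)] exI[of _ e] ballI)
qed

lemma F_affine_left:
  assumes "1 < r" "r < P"
  shows "\<exists>d>0. \<exists>e. \<forall>y\<in>{r-d..r}. F y = (\<Sum>z\<in>{z\<in>nodes. z < r}. coeff z) * y + e"
proof -
  obtain d e where d: "0 < d"
    and g: "\<forall>y\<in>{r-d..r}. g y = (\<Sum>z\<in>{z\<in>nodes. z < r}. coeff z) * y + e"
    unfolding g_def using sum_hinge_affine_left[OF finite_nodes] by blast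
  define d' where "d' = min d (r - 1)"
  have d': "0 < d'" "d' \<le> d" "d' \<le> r - 1"
    using d assms by (simp_all add: d'_def)
  have "F y = (\<Sum>z\<in>{z\<in>nodes. z < r}. coeff z) * y + e" if "y \<in> {r - d'..r}" for y
    using that assms d' g F_eq_g[of y] by simp
  then show ?thesis
    by (intro exI[of _ d'] conjI[OF d'(1)] exI[of _ e] ballI)
qed

lemma F_affine_left_1: "\<exists>d>0. \<exists>e. \<forall>y\<in>{1-d..1}. F y = (P * (\<Sum>z\<in>nodes. coeff z)) * y + e"
proof -
  obtain d e where d: "0 < d"
    and g: "\<forall>y\<in>{P-d..P}. g y = (\<Sum>z\<in>{z\<in>nodes. z < P}. coeff z) * y + e"
    unfolding g_def using sum_hinge_affine_left[OF finite_nodes] by blast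
  have nodes: "{z\<in>nodes. z < P} = nodes"
    using nodes_bounds by auto
  define d' where "d' = min d (P - 1)"
  have d': "0 < d'" "d' \<le> d" "d' \<le> P - 1"
    using d P_gt_1 by (simp_all add: d'_def)
  have "F y = (P * (\<Sum>z\<in>nodes. coeff z)) * y + e" if "y \<in> {1 - d' / P..1}" for y
  proof -
    have Py: "P * y \<in> {P - d'..P}"
      using that P_gt_1 by (auto simp: field_simps)
    then have "0 < P * y"
      using d'(3) by auto
    then have "0 < y"
      using P_pos by (simp add: zero_less_mult_iff)
    then have "F y = F (P * y)"
      using F_periodic by (simp add: periodic_def)
    also have "\<dots> = g (P * y)"
      using Py d'(3) by (intro F_eq_g) auto
    also have "\<dots> = (P * (\<Sum>z\<in>nodes. coeff z)) * y + e"
      using g Py d'(2) nodes by simp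
    finally show ?thesis .
  qed
  moreover have "0 < d' / P"
    using d'(1) P_gt_1 by simp
  ultimately show ?thesis
    by (intro exI[of _ "d' / P"] conjI exI[of _ e] ballI)
qed

lemma Ord_F_gt_1:
  assumes H: "H \<in> Cp p" and r: "1 < rep H"
  shows "Ord p H F = D H"
proof -
  define r where "r = rep H"
  have "r < P"
    using rep_bounds[OF H] by (simp add: r_def)
  obtain dR eR where dR: "0 < dR" "\<forall>y\<in>{r..r+dR}. F y = (\<Sum>z\<in>{z\<in>nodes. z \<le> r}. coeff z) * y + eR"
    using F_affine_right[of r] \<open>r < P\<close> r by (auto simp: r_def)
  obtain dL eL where dL: "0 < dL" "\<forall>y\<in>{r-dL..r}. F y = (\<Sum>z\<in>{z\<in>nodes. z < r}. coeff z) * y + eL"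
    using F_affine_left[of r] \<open>r < P\<close> r by (auto simp: r_def)
  define d where "d = min (min dR dL) (r / 2)"
  have "0 < d" "d < r"
    using dR dL r by (auto simp: d_def r_def)
  then have "Ord p H F = r * ((\<Sum>z\<in>{z\<in>nodes. z \<le> r}. coeff z) - (\<Sum>z\<in>{z\<in>nodes. z < r}. coeff z))"
    using dR dL scal_eq_rep_mult_powi[of H]
    by (intro Ord_eq_slope_jump[OF H F_periodic, where d = d]) (auto simp: d_def r_def)
  also have "\<dots> = (if r \<in> nodes then r * coeff r else 0)"
    by (simp add: sum_le_minus_sum_less[OF finite_nodes])
  also have "\<dots> = D H"
    using r scaled_rep[OF H] nodes_def supp_def by (auto simp: coeff_def val_def r_def)
  finally show ?thesis .
qed

lemma Ord_F_at_1:
  assumes H: "H \<in> Cp p" and r: "rep H = 1"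
  shows "Ord p H F = D H"
proof -
  obtain dR eR where dR: "0 < dR" "\<forall>y\<in>{1..1+dR}. F y = (\<Sum>z\<in>{z\<in>nodes. z \<le> 1}. coeff z) * y + eR"
    using F_affine_right[of 1] P_gt_1 by auto
  obtain dL eL where dL: "0 < dL" "\<forall>y\<in>{1-dL..1}. F y = (P * (\<Sum>z\<in>nodes. coeff z)) * y + eL"
    using F_affine_left_1 by auto
  define d where "d = min (min dR dL) (1 / 2)"
  have "0 < d" "d < 1"
    using dR dL by (auto simp: d_def)
  then have "Ord p H F = 1 * ((\<Sum>z\<in>{z\<in>nodes. z \<le> 1}. coeff z) - P * (\<Sum>z\<in>nodes. coeff z))"
    using dR dL scal_eq_rep_mult_powi[of H] r
    by (intro Ord_eq_slope_jump[OF H F_periodic, where d = d]) (auto simp: d_def)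
  also have "{z\<in>nodes. z \<le> 1} = {1}"
    using nodes_bounds one_in_nodes by force
  also have "(\<Sum>z\<in>nodes. coeff z) = coeff 1 + tail"
    unfolding sum_nodes_remove_1 tail_def by (auto simp: coeff_def intro: sum.cong)
  finally have "Ord p H F = coeff 1 - P * (coeff 1 + tail)"
    by simp
  also have "\<dots> = - (coeff 1 * (P - 1)) - P * tail"
    by (simp add: algebra_simps)
  also have "\<dots> = val 1"
    by (simp add: coeff_1_mult)
  finally show ?thesis
    using scaled_rep[OF H] r by (simp add: val_def)
qed

lemma Ord_F: "H \<in> Cp p \<Longrightarrow> Ord p H F = D H"
  using Ord_F_gt_1 Ord_F_at_1 rep_bounds[of H] by (cases "rep H = 1") auto

lemma principal_F: "principal p F = D"
  using D_Div by (auto simp: principal_def Ord_F Div_def)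

end

lemma (in prime_scaling) balanced_in_Prin:
  assumes "D \<in> Div p" "deg D = 0" "chiD p D = 0"
  shows "D \<in> Prin p"
proof -
  interpret balanced_divisor p D
    using assms by unfold_locales
  show ?thesis
    using principal_F F_in_K unfolding Prin_def by (metis image_eqI)
qed

theorem theorem5p6:
  fixes p :: nat
  assumes "prime p"
  shows "Prin p \<subseteq> Div p
    \<and> (\<forall>D\<in>Prin p. deg D = 0 \<and> chiD p D = 0)
    \<and> (\<forall>D\<in>Div p. \<forall>E\<in>Div p.
          (deg D = deg E \<and> chiD p D = chiD p E) \<longleftrightarrow> (\<lambda>H. D H - E H) \<in> Prin p)
    \<and> (\<forall>r::real. \<forall>c\<in>{0..<int p - 1}. \<exists>D\<in>Div p. deg D = r \<and> chiD p D = c)"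
proof -
  interpret prime_scaling p
    using assms prime_gt_1_nat[OF assms] by unfold_locales auto
  have principal: "D \<in> Div p \<and> deg D = 0 \<and> chiD p D = 0" if "D \<in> Prin p" for D
    using that principal_in_Div_deg_chiD by (auto simp: Prin_def)
  have kernel: "(deg D = deg E \<and> chiD p D = chiD p E) \<longleftrightarrow> (\<lambda>H. D H - E H) \<in> Prin p"
    if "D \<in> Div p" "E \<in> Div p" for D E
    using that principal[of "\<lambda>H. D H - E H"] balanced_in_Prin[OF Div_diff[OF that]]
    by (auto simp: deg_diff chiD_diff_eq_0_iff)
  show ?thesis
    using principal kernel ex_divisor_deg_chiD by (intro conjI subsetI ballI allI) auto
qed

end
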